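(* Let $W=\{0,\tfrac16,\tfrac13,\tfrac12\}\subset S^1$. Then $P(W)$ holds.
   Context: Identify $S^1$ with $\mathbb{R}/\mathbb{Z}$. The group $O(2)$ acts on $S^1$ by translations $x\mapsto x+a$ and reflections $x\mapsto -x+2a$. A coloring $c:S^1\to\{R,B\}$ is distinguishing if no non-identity $\gamma\in O(2)$ satisfies $c\circ\gamma=c$. For $W\subset S^1$ with trivial pointwise stabilizer in $O(2)$, $P(W)$ holds if every precoloring $c:S^1\setminus W\to\{R,B\}$ extends to a distinguishing coloring of $S^1$. *)

theory Defs
  imports Complex_Main
begin

text \<open>S^1 = R/Z is modelled by reals modulo 1: a function on S^1 is a
  1-periodic function on the reals, and a subset of S^1 is given by a set of
  representatives W (a real x lies in W as a point of S^1 iff x - w is an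
  integer for some w in W).\<close>

datatype color = R | B

definition periodic1 :: "(real \<Rightarrow> 'b) \<Rightarrow> bool" where
  "periodic1 f \<longleftrightarrow> (\<forall>x. f (x + 1) = f x)"

definition in_circle_set :: "real \<Rightarrow> real set \<Rightarrow> bool" where
  "in_circle_set x W \<longleftrightarrow> (\<exists>w\<in>W. x - w \<in> \<int>)"

text \<open>A coloring of S^1 is distinguishing if no non-identity element of O(2)
  preserves it. Translations x + a are the identity iff a is an integer;
  reflections x \<mapsto> -x + 2a are never the identity on S^1.\<close>

definition distinguishing :: "(real \<Rightarrow> color) \<Rightarrow> bool" where
  "distinguishing c \<longleftrightarrow>
     (\<forall>a. (\<forall>x. c (x + a) = c x) \<longrightarrow> a \<in> \<int>) \<and>
     (\<forall>a. \<not> (\<forall>x. c (- x + 2 * a) = c x))"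

text \<open>P(W): every precoloring of S^1 minus W extends to a distinguishing
  coloring. A precoloring is represented by any periodic coloring p whose
  values on W are ignored.\<close>

definition P :: "real set \<Rightarrow> bool" where
  "P W \<longleftrightarrow> (\<forall>p. periodic1 p \<longrightarrow>
     (\<exists>c. periodic1 c \<and> (\<forall>x. \<not> in_circle_set x W \<longrightarrow> c x = p x) \<and> distinguishing c))"

end

theory Submission
  imports Defs
begin

(* Given the precoloring p, we color the four points
   of W so that the hexagon {0, 1/6, ..., 5/6} has no reflection symmetry and one of
   two color patterns holds on W.  We show that then one of c and the four colorings
   flip c w (c with the color of the single point w \<in> W changed) is distinguishing.
   1. Two colorings differing at exactly one point w cannot both have non-trivial
      translations, and a reflection of one together with a translation of the other
      forces the reflection to fix w.
   2. Hence, if all five colorings are symmetric, c is invariant under a reflection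
      x \<mapsto> a - x with a off the lattice (1/6)\<int>, and each flip c w under a reflection
      x \<mapsto> \<alpha> w - x that neither fixes w nor agrees with the first one
      (locale reflection_data).
   3. Following a point along compositions of these reflections yields congruences
      modulo 1 between a and the \<alpha> w: a sum rule and a difference rule for points of
      equal color, and an opposite rule for points of different colors.
   4. For both color patterns on W these congruences are inconsistent.
   Finally every precoloring extends to a coloring with one of these patterns and
   without reflections of the hexagon, which yields the theorem. *)

fun other :: "color \<Rightarrow> color" where
  "other R = B" | "other B = R"

lemma other_neq [simp]: "other x \<noteq> x" "x \<noteq> other x"
  by (cases x; simp)+

lemma other_other [simp]: "other (other x) = x"
  by (cases x) simp_all

lemma other_eq_iff [simp]: "other x = other y \<longleftrightarrow> x = y"
  by (cases x; cases y) simp_all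

lemma neq_other_iff: "x \<noteq> y \<longleftrightarrow> y = other x"
  by (cases x; cases y) simp_all

lemma periodic1_add_int:
  assumes "periodic1 c"
  shows "c (x + of_int n) = c x"
proof (induction n rule: int_induct[where k = 0])
  case (step1 i)
  have "c (x + of_int (i + 1)) = c ((x + of_int i) + 1)" by (simp add: algebra_simps)
  with step1 assms show ?case unfolding periodic1_def by simp
next
  case (step2 i)
  have "c (x + of_int (i - 1)) = c (x + of_int (i - 1) + 1)"
    using assms unfolding periodic1_def by metis
  also have "\<dots> = c (x + of_int i)" by (simp add: algebra_simps)
  finally show ?case using step2 by simp
qed simp

lemma periodic1_cong:
  assumes "periodic1 c" and "x - y \<in> \<int>"
  shows "c x = c y"
proof -
  obtain n where "x = y + of_int n"
    using assms(2) by (metis Ints_cases add_diff_cancel_left' diff_add_cancel)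
  then show ?thesis using periodic1_add_int[OF assms(1)] by simp
qed

lemma periodic1_not_cong:
  assumes "periodic1 c" and "c x \<noteq> c y"
  shows "x - y \<notin> \<int>"
  using assms periodic1_cong by blast

lemma Ints_diff_commute: "x - y \<in> \<int> \<longleftrightarrow> y - x \<in> \<int>" for x y :: real
  by (metis minus_diff_eq minus_in_Ints_iff)

lemma Ints_add_1_diff_iff: "x + 1 - y \<in> \<int> \<longleftrightarrow> x - y \<in> \<int>" for x y :: real
  by (metis Ints_1 Ints_add Ints_diff add_diff_cancel_right' diff_add_eq)

lemma Ints_between_0_1: "0 < r \<Longrightarrow> r < 1 \<Longrightarrow> (r::real) \<notin> \<int>"
  by (simp add: frac_eq_0_iff[symmetric] frac_eq)

lemma sixths_not_Int:
  "(1/6::real) \<notin> \<int>" "(1/3::real) \<notin> \<int>" "(1/2::real) \<notin> \<int>" "(2/3::real) \<notin> \<int>"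
  by (simp_all add: Ints_between_0_1)

lemma three_points_two_values:
  fixes t s s' p q r :: real
  assumes choice: "\<And>w. w \<in> {p, q, r} \<Longrightarrow> t - w - s \<in> \<int> \<or> t - w - s' \<in> \<int>"
    and distinct: "p - q \<notin> \<int>" "p - r \<notin> \<int>" "q - r \<notin> \<int>"
  shows False
proof -
  have same_value: "w - w' \<in> \<int>" if "t - w - v \<in> \<int>" "t - w' - v \<in> \<int>" for w w' v
    using Ints_diff[OF that(2) that(1)] by simp
  show False using choice[of p] choice[of q] choice[of r] distinct same_value by blast
qed

text \<open>Integer linear combinations of integers are integers; the coefficients serve
  as certificates in the congruence computations below.\<close>

lemma Ints_lincomb2:
  "u \<in> \<int> \<Longrightarrow> v \<in> \<int> \<Longrightarrow> t = of_int i * u + of_int j * v + of_int k \<Longrightarrow> (t::real) \<in> \<int>"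
  by simp

lemma Ints_lincomb3:
  "u \<in> \<int> \<Longrightarrow> v \<in> \<int> \<Longrightarrow> w \<in> \<int> \<Longrightarrow>
   t = of_int i * u + of_int j * v + of_int l * w + of_int k \<Longrightarrow> (t::real) \<in> \<int>"
  by simp


section \<open>Symmetries and single-point changes\<close>

definition flip :: "(real \<Rightarrow> color) \<Rightarrow> real \<Rightarrow> real \<Rightarrow> color" where
  "flip c w x = (if x - w \<in> \<int> then other (c x) else c x)"

lemma flip_off: "x - w \<notin> \<int> \<Longrightarrow> flip c w x = c x"
  by (simp add: flip_def)

lemma flip_self: "flip c w w = other (c w)"
  by (simp add: flip_def)

lemma flip_flip: "flip (flip c w) w = c"
  by (simp add: flip_def fun_eq_iff)

lemma periodic1_flip:
  assumes "periodic1 c"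
  shows "periodic1 (flip c w)"
  using assms unfolding periodic1_def flip_def by (simp add: Ints_add_1_diff_iff)

lemma flip_outside:
  assumes "w \<in> W" and "\<not> in_circle_set x W"
  shows "flip c w x = c x"
  using assms by (auto simp: in_circle_set_def flip_off)

definition translation_invariant :: "(real \<Rightarrow> color) \<Rightarrow> real \<Rightarrow> bool" where
  "translation_invariant c d \<longleftrightarrow> (\<forall>x. c (x + d) = c x)"

definition reflection_invariant :: "(real \<Rightarrow> color) \<Rightarrow> real \<Rightarrow> bool" where
  "reflection_invariant c b \<longleftrightarrow> (\<forall>x. c (b - x) = c x)"

lemma reflection_invariantD: "reflection_invariant c b \<Longrightarrow> c (b - x) = c x"
  by (simp add: reflection_invariant_def)

lemma translation_invariantD: "translation_invariant c d \<Longrightarrow> c (x + d) = c x"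
  by (simp add: translation_invariant_def)

text \<open>The reflection x \<mapsto> -x + 2a is written x \<mapsto> b - x with parameter b = 2a.\<close>

lemma not_distinguishing_cases:
  assumes "\<not> distinguishing c"
  obtains d where "d \<notin> \<int>" "translation_invariant c d" | b where "reflection_invariant c b"
proof -
  have "\<forall>x. c (2 * a - x) = c (- x + 2 * a)" for a by (simp add: algebra_simps)
  then show ?thesis
    using assms that unfolding distinguishing_def translation_invariant_def reflection_invariant_def
    by metis
qed

lemma reflection_flip_off:
  assumes "reflection_invariant (flip c w) b" and "z - w \<notin> \<int>" and "b - z - w \<notin> \<int>"
  shows "c (b - z) = c z"
  using reflection_invariantD[OF assms(1), of z] assms(2,3) by (simp add: flip_off)

lemma translation_flip_off:
  assumes "translation_invariant (flip c w) d" and "z - w \<notin> \<int>" and "z + d - w \<notin> \<int>"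
  shows "c (z + d) = c z"
  using translation_invariantD[OF assms(1), of z] assms(2,3) by (simp add: flip_off)

lemma reflection_flip_moving:
  assumes "reflection_invariant (flip c w) b" and "b - 2 * w \<notin> \<int>"
  shows "c (b - w) = other (c w)"
proof -
  have "b - w - w \<notin> \<int>" using assms(2) by (simp add: algebra_simps)
  then show ?thesis using reflection_invariantD[OF assms(1), of w] by (simp add: flip_off flip_self)
qed

lemma translation_flip_moving:
  assumes "translation_invariant (flip c w) d" and "d \<notin> \<int>"
  shows "c (w + d) = other (c w)" and "c (w - d) = other (c w)"
proof -
  show "c (w + d) = other (c w)"
    using translation_invariantD[OF assms(1), of w] assms(2) by (simp add: flip_off flip_self)
  have "w - d - w \<notin> \<int>" using assms(2) by simp
  then show "c (w - d) = other (c w)"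
    using translation_invariantD[OF assms(1), of "w - d"] by (simp add: flip_off flip_self)
qed

lemma reflection_flip_fixing:
  assumes "reflection_invariant (flip c w) b" and "b - 2 * w \<in> \<int>"
  shows "reflection_invariant c b"
  unfolding reflection_invariant_def
proof
  fix z
  have "(b - z - w) + (z - w) \<in> \<int>" using assms(2) by (simp add: algebra_simps)
  then have "b - z - w \<in> \<int> \<longleftrightarrow> z - w \<in> \<int>"
    using Ints_diff by (metis add_diff_cancel_left' add_diff_cancel_right')
  then show "c (b - z) = c z"
    using reflection_invariantD[OF assms(1), of z] unfolding flip_def by (auto split: if_splits)
qed

lemma translations_single_change:
  assumes per: "periodic1 c"
    and ta: "translation_invariant c a" "a \<notin> \<int>"
    and td: "translation_invariant (flip c w) d" "d \<notin> \<int>"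
  shows False
proof (cases "a + d \<in> \<int>")
  case True
  have "c (w + d) = c (w - a)"
    by (rule periodic1_cong[OF per]) (use True in \<open>simp add: algebra_simps\<close>)
  also have "\<dots> = c w" using translation_invariantD[OF ta(1), of "w - a"] by simp
  finally show False using translation_flip_moving(1)[OF td] by simp
next
  case False
  have "c (w + a + d) = c (w + a)"
    by (rule translation_flip_off[OF td(1)]) (use ta(2) False in \<open>simp_all add: algebra_simps\<close>)
  then have "c (w + d) = c w"
    using translation_invariantD[OF ta(1), of w] translation_invariantD[OF ta(1), of "w + d"]
    by (simp add: algebra_simps)
  then show False using translation_flip_moving(1)[OF td] by simp
qed

lemma reflection_translation_single_change:
  assumes per: "periodic1 c" and rb: "reflection_invariant c b"
    and td: "translation_invariant (flip c w) d" "d \<notin> \<int>"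
  shows "b - 2 * w \<in> \<int>"
proof (rule ccontr)
  assume moved: "b - 2 * w \<notin> \<int>"
  have image: "c (b - w) = c w" using reflection_invariantD[OF rb] .
  have "c (b - w) = c (w - d)"
  proof (cases "b - w + d - w \<in> \<int>")
    case True
    then show ?thesis by (intro periodic1_cong[OF per]) (simp add: algebra_simps)
  next
    case False
    have "c (b - w + d) = c (b - w)"
      by (rule translation_flip_off[OF td(1)]) (use moved False in \<open>simp_all add: algebra_simps\<close>)
    then show ?thesis using reflection_invariantD[OF rb, of "b - w + d"] image by simp
  qed
  then show False using image translation_flip_moving(2)[OF td] by simp
qed

lemma reflections_single_change:
  assumes per: "periodic1 c" and rb: "reflection_invariant c b"
    and rb': "reflection_invariant (flip c w) b'" and same: "b - b' \<in> \<int>"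
  shows "b - 2 * w \<in> \<int>"
proof -
  have "b' - 2 * w \<in> \<int>"
  proof (rule ccontr)
    assume "b' - 2 * w \<notin> \<int>"
    then have "c (b' - w) = other (c w)" by (rule reflection_flip_moving[OF rb'])
    moreover have "c (b' - w) = c (b - w)"
      by (rule periodic1_cong[OF per]) (use same in \<open>simp add: Ints_diff_commute\<close>)
    ultimately show False using reflection_invariantD[OF rb, of w] by simp
  qed
  then show ?thesis by (rule Ints_lincomb2[OF _ same, where i = 1 and j = 1 and k = 0]) simp
qed


section \<open>Reflections when all five colorings are symmetric\<close>

text \<open>c has no reflection symmetry with parameter in (1/6)\<int>, i.e. none mapping the
  hexagon {0, 1/6, ..., 5/6} to itself.\<close>

definition no_lattice_reflection :: "(real \<Rightarrow> color) \<Rightarrow> bool" where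
  "no_lattice_reflection c \<longleftrightarrow> (\<forall>b. 6 * b \<in> \<int> \<longrightarrow> \<not> reflection_invariant c b)"

lemma no_lattice_reflectionD:
  "no_lattice_reflection c \<Longrightarrow> reflection_invariant c b \<Longrightarrow> 6 * b \<notin> \<int>"
  by (auto simp: no_lattice_reflection_def)

lemma off_lattice_reflection:
  assumes per: "periodic1 c" and nolat: "no_lattice_reflection c" and w: "12 * w \<in> \<int>"
    and nd: "\<not> distinguishing c" "\<not> distinguishing (flip c w)"
  obtains a where "reflection_invariant c a" "6 * a \<notin> \<int>"
proof (cases rule: not_distinguishing_cases[OF nd(1)])
  case (1 d)
  then show thesis
  proof (cases rule: not_distinguishing_cases[OF nd(2)])
    case (1 d')
    then show thesis using translations_single_change[OF per] \<open>d \<notin> \<int>\<close>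
      \<open>translation_invariant c d\<close> by blast
  next
    case (2 b)
    have "translation_invariant (flip (flip c w) w) d" using 1 by (simp add: flip_flip)
    then have "b - 2 * w \<in> \<int>"
      using reflection_translation_single_change[OF periodic1_flip[OF per] 2] \<open>d \<notin> \<int>\<close> by blast
    moreover from this have "6 * b \<in> \<int>"
      by (rule Ints_lincomb2[OF _ w, where i = 6 and j = 1 and k = 0]) simp
    ultimately show thesis
      using no_lattice_reflectionD[OF nolat reflection_flip_fixing[OF 2]] by blast
  qed
next
  case (2 a)
  then show thesis using that no_lattice_reflectionD[OF nolat] by blast
qed

lemma flip_reflection_parameter:
  assumes per: "periodic1 c" and nolat: "no_lattice_reflection c"
    and ra: "reflection_invariant c a" and a: "6 * a \<notin> \<int>"
    and w: "12 * w \<in> \<int>" and nd: "\<not> distinguishing (flip c w)"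
  obtains \<alpha> where "reflection_invariant (flip c w) \<alpha>" "\<alpha> - 2 * w \<notin> \<int>" "a - \<alpha> \<notin> \<int>"
proof -
  have sixth: "6 * b \<in> \<int>" if "b - 2 * w \<in> \<int>" for b
    by (rule Ints_lincomb2[OF that w, where i = 6 and j = 1 and k = 0]) simp
  then have a_moves: "a - 2 * w \<notin> \<int>" using a by blast
  show thesis
  proof (cases rule: not_distinguishing_cases[OF nd])
    case (1 d)
    then show thesis using reflection_translation_single_change[OF per ra] a_moves by blast
  next
    case (2 \<alpha>)
    have "\<alpha> - 2 * w \<notin> \<int>"
      using sixth no_lattice_reflectionD[OF nolat reflection_flip_fixing[OF 2]] by blast
    moreover have "a - \<alpha> \<notin> \<int>"
      using reflections_single_change[OF per ra 2] a_moves by blast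
    ultimately show thesis using that 2 by blast
  qed
qed


section \<open>Congruences between the reflection parameters\<close>

text \<open>The data produced above when all five colorings are symmetric: c is invariant
  under x \<mapsto> a - x with a off the lattice, and for each w in a set S of lattice points
  flip c w is invariant under x \<mapsto> \<alpha> w - x, where \<alpha> w moves w and differs from a.\<close>

locale reflection_data =
  fixes c :: "real \<Rightarrow> color" and a :: real and S :: "real set" and \<alpha> :: "real \<Rightarrow> real"
  assumes periodic: "periodic1 c"
    and reflection_a: "reflection_invariant c a"
    and a_off_lattice: "6 * a \<notin> \<int>"
    and S_lattice: "w \<in> S \<Longrightarrow> 6 * w \<in> \<int>"
    and reflection_\<alpha>: "w \<in> S \<Longrightarrow> reflection_invariant (flip c w) (\<alpha> w)"
    and \<alpha>_moves: "w \<in> S \<Longrightarrow> \<alpha> w - 2 * w \<notin> \<int>"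
    and \<alpha>_apart: "w \<in> S \<Longrightarrow> a - \<alpha> w \<notin> \<int>"
begin

lemma reflect_a: "c (a - z) = c z"
  using reflection_invariantD[OF reflection_a] .

lemma reflect_\<alpha>: "w \<in> S \<Longrightarrow> z - w \<notin> \<int> \<Longrightarrow> \<alpha> w - z - w \<notin> \<int> \<Longrightarrow> c (\<alpha> w - z) = c z"
  using reflection_flip_off[OF reflection_\<alpha>] .

lemma image_other: "w \<in> S \<Longrightarrow> c (\<alpha> w - w) = other (c w)"
  using reflection_flip_moving[OF reflection_\<alpha> \<alpha>_moves] .

lemma mirror_image_other: "w \<in> S \<Longrightarrow> c (a - \<alpha> w + w) = other (c w)"
  using reflect_a[of "\<alpha> w - w"] image_other by (simp add: algebra_simps)

lemma a_not_sum: "x \<in> S \<Longrightarrow> y \<in> S \<Longrightarrow> a - x - y \<notin> \<int>"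
  using Ints_lincomb3[OF _ S_lattice S_lattice, where i = 6 and j = 1 and l = 1 and k = 0]
    a_off_lattice by fastforce

text \<open>Applying to x the reflections with parameters \<alpha> y, a, \<alpha> x, \<alpha> y leads to
  a - \<alpha> x + x, whose color differs from that of x.  Each step preserves the color of c
  unless it touches the point where the flipped coloring differs from c, so one of
  the listed congruences must hold.\<close>

lemma chain_to_mirror_image:
  assumes x: "x \<in> S" and y: "y \<in> S" and xy: "x - y \<notin> \<int>"
  shows "\<alpha> y - x - y \<in> \<int> \<or> \<alpha> x + \<alpha> y - a - 2 * x \<in> \<int> \<or>
         \<alpha> x + \<alpha> y - a - x - y \<in> \<int> \<or> a - \<alpha> x + x - y \<in> \<int>"
proof (rule ccontr)
  assume "\<not> ?thesis"
  then have n: "\<alpha> y - x - y \<notin> \<int>" "\<alpha> x + \<alpha> y - a - 2 * x \<notin> \<int>"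
    "\<alpha> x + \<alpha> y - a - x - y \<notin> \<int>" "a - \<alpha> x + x - y \<notin> \<int>" by auto
  have "c x = c (\<alpha> y - x)" using reflect_\<alpha>[OF y xy n(1)] by simp
  also have "\<dots> = c (a - \<alpha> y + x)" using reflect_a[of "\<alpha> y - x"] by (simp add: algebra_simps)
  also have "\<dots> = c (\<alpha> x - a + \<alpha> y - x)"
    using reflect_\<alpha>[OF x, of "a - \<alpha> y + x"] \<alpha>_apart[OF y] n(2) by (simp add: algebra_simps)
  also have "\<dots> = c (a - \<alpha> x + x)"
    using reflect_\<alpha>[OF y, of "\<alpha> x - a + \<alpha> y - x"] n(3,4) by (simp add: algebra_simps)
  finally show False using mirror_image_other[OF x] by simp
qed

text \<open>Likewise for the reflections with parameters a, \<alpha> y, \<alpha> x, a, \<alpha> y, which lead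
  from x to \<alpha> x - x.\<close>

lemma chain_to_image:
  assumes x: "x \<in> S" and y: "y \<in> S" and xy: "x - y \<notin> \<int>"
  shows "\<alpha> y - a + x - y \<in> \<int> \<or> \<alpha> x - \<alpha> y + a - 2 * x \<in> \<int> \<or>
         \<alpha> y - \<alpha> x + x - y \<in> \<int> \<or> \<alpha> x - x - y \<in> \<int>"
proof (rule ccontr)
  assume "\<not> ?thesis"
  then have n: "\<alpha> y - a + x - y \<notin> \<int>" "\<alpha> x - \<alpha> y + a - 2 * x \<notin> \<int>"
    "\<alpha> y - \<alpha> x + x - y \<notin> \<int>" "\<alpha> x - x - y \<notin> \<int>" by auto
  have "c x = c (a - x)" using reflect_a[of x] by simp
  also have "\<dots> = c (\<alpha> y - a + x)"
    using reflect_\<alpha>[OF y, of "a - x"] a_not_sum[OF x y] n(1) by (simp add: algebra_simps)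
  also have "\<dots> = c (\<alpha> x - \<alpha> y + a - x)"
    using reflect_\<alpha>[OF x, of "\<alpha> y - a + x"] \<alpha>_apart[OF y] n(2)
    by (simp add: algebra_simps Ints_diff_commute)
  also have "\<dots> = c (\<alpha> y - \<alpha> x + x)"
    using reflect_a[of "\<alpha> x - \<alpha> y + a - x"] by (simp add: algebra_simps)
  also have "\<dots> = c (\<alpha> x - x)"
    using reflect_\<alpha>[OF y, of "\<alpha> y - \<alpha> x + x"] n(3,4) by (simp add: algebra_simps)
  finally show False using image_other[OF x] by simp
qed

text \<open>Points whose colors are known to be opposite are distinct on S^1; the
  equation t = u - v lets the difference be presented in any normal form.\<close>

lemma other_color_not_cong: "c u = other (c v) \<Longrightarrow> t = u - v \<Longrightarrow> t \<notin> \<int>"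
  using periodic1_not_cong[OF periodic, of u v] by simp

lemma chain_to_mirror_image_equal_colors:
  assumes x: "x \<in> S" and y: "y \<in> S" and same: "c x = c y" and xy: "x - y \<notin> \<int>"
  shows "\<alpha> x + \<alpha> y - a - 2 * x \<in> \<int> \<or> \<alpha> x + \<alpha> y - a - x - y \<in> \<int>"
proof -
  have "\<alpha> y - x - y \<notin> \<int>"
    by (rule other_color_not_cong[of "\<alpha> y - y" x]) (simp_all add: image_other[OF y] same)
  moreover have "a - \<alpha> x + x - y \<notin> \<int>"
    by (rule other_color_not_cong[of "a - \<alpha> x + x" y]) (simp_all add: mirror_image_other[OF x] same)
  ultimately show ?thesis using chain_to_mirror_image[OF x y xy] by blast
qed

lemma chain_to_image_equal_colors:
  assumes x: "x \<in> S" and y: "y \<in> S" and same: "c x = c y" and xy: "x - y \<notin> \<int>"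
  shows "\<alpha> x - \<alpha> y + a - 2 * x \<in> \<int> \<or> \<alpha> y - \<alpha> x + x - y \<in> \<int>"
proof -
  have "\<alpha> y - a + x - y \<notin> \<int>"
    by (rule other_color_not_cong[of x "a - \<alpha> y + y"]) (simp_all add: mirror_image_other[OF y] same)
  moreover have "\<alpha> x - x - y \<notin> \<int>"
    by (rule other_color_not_cong[of "\<alpha> x - x" y]) (simp_all add: image_other[OF x] same)
  ultimately show ?thesis using chain_to_image[OF x y xy] by blast
qed

lemma sum_rule:
  assumes x: "x \<in> S" and y: "y \<in> S" and same: "c x = c y" and doubles: "2 * x - 2 * y \<notin> \<int>"
  shows "\<alpha> x + \<alpha> y - a - x - y \<in> \<int>"
proof -
  have "x - y \<notin> \<int>" using doubles Ints_mult[of 2 "x - y"] by (auto simp: right_diff_distrib)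
  then have xy: "x - y \<notin> \<int>" "y - x \<notin> \<int>" by (simp_all add: Ints_diff_commute)
  have "\<not> (\<alpha> x + \<alpha> y - a - 2 * x \<in> \<int> \<and> \<alpha> y + \<alpha> x - a - 2 * y \<in> \<int>)"
  proof
    assume h: "\<alpha> x + \<alpha> y - a - 2 * x \<in> \<int> \<and> \<alpha> y + \<alpha> x - a - 2 * y \<in> \<int>"
    have "2 * x - 2 * y \<in> \<int>"
      by (rule Ints_lincomb2[OF conjunct1[OF h] conjunct2[OF h], where i = "-1" and j = 1 and k = 0])
        simp
    then show False using doubles by blast
  qed
  moreover have "\<alpha> y + \<alpha> x - a - y - x = \<alpha> x + \<alpha> y - a - x - y" by simp
  ultimately show ?thesis
    using chain_to_mirror_image_equal_colors[OF x y same xy(1)]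
      chain_to_mirror_image_equal_colors[OF y x same[symmetric] xy(2)] by metis
qed

lemma difference_rule:
  assumes x: "x \<in> S" and y: "y \<in> S" and same: "c x = c y" and xy: "x - y \<notin> \<int>"
  shows "\<alpha> y - y - (\<alpha> x - x) \<in> \<int>"
proof -
  have yx: "y - x \<notin> \<int>" using xy by (simp add: Ints_diff_commute)
  have "\<not> (\<alpha> x - \<alpha> y + a - 2 * x \<in> \<int> \<and> \<alpha> y - \<alpha> x + a - 2 * y \<in> \<int>)"
  proof
    assume h: "\<alpha> x - \<alpha> y + a - 2 * x \<in> \<int> \<and> \<alpha> y - \<alpha> x + a - 2 * y \<in> \<int>"
    have "6 * a \<in> \<int>"
      by (rule Ints_lincomb3[OF Ints_add[OF conjunct1[OF h] conjunct2[OF h]]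
            S_lattice[OF x] S_lattice[OF y], where i = 3 and j = 1 and l = 1 and k = 0]) simp
    then show False using a_off_lattice by blast
  qed
  moreover have "\<alpha> y - \<alpha> x + x - y = \<alpha> y - y - (\<alpha> x - x)" by simp
  moreover have "\<alpha> x - \<alpha> y + y - x \<in> \<int> \<longleftrightarrow> \<alpha> y - y - (\<alpha> x - x) \<in> \<int>"
    using Ints_diff_commute[of "\<alpha> x - x" "\<alpha> y - y"] by (simp add: algebra_simps)
  ultimately show ?thesis
    using chain_to_image_equal_colors[OF x y same xy]
      chain_to_image_equal_colors[OF y x same[symmetric] yx] by metis
qed

lemma opposite_rule:
  assumes x: "x \<in> S" and y: "y \<in> S" and differ: "c x \<noteq> c y"
  shows "\<alpha> y - x - y \<in> \<int> \<or> \<alpha> x + \<alpha> y - a - 2 * x \<in> \<int> \<or> a - \<alpha> x + x - y \<in> \<int>"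
proof -
  have "\<alpha> x + \<alpha> y - a - x - y \<notin> \<int>"
    by (rule other_color_not_cong[of "\<alpha> y - y" "a - \<alpha> x + x"])
      (use differ in \<open>simp_all add: image_other[OF y] mirror_image_other[OF x] neq_other_iff\<close>)
  then show ?thesis
    using chain_to_mirror_image[OF x y periodic1_not_cong[OF periodic differ]] by blast
qed

text \<open>By the difference and sum rules \<alpha> w = \<alpha> 0 + w for the three equally colored w and
  2 \<alpha> 0 = a; the opposite rule then forces \<alpha> (1/3) - w into {1/3, a - \<alpha> 0} for each
  of them.\<close>

lemma pattern_A_choice:
  assumes S: "{0, 1/6, 1/3, 1/2} \<subseteq> S" and w: "w \<in> S" and same: "c w = c 0"
    and differ: "c (1/3) \<noteq> c 0" and double: "2 * \<alpha> 0 - a \<in> \<int>"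
    and shift: "\<alpha> w - w - \<alpha> 0 \<in> \<int>"
  shows "\<alpha> (1/3) - w - 1/3 \<in> \<int> \<or> \<alpha> (1/3) - w - (a - \<alpha> 0) \<in> \<int>"
proof -
  have "a - \<alpha> w + w - 1/3 \<notin> \<int>"
  proof
    assume "a - \<alpha> w + w - 1/3 \<in> \<int>"
    then have "6 * a \<in> \<int>"
      by (rule Ints_lincomb3[OF _ shift double, where i = 12 and j = 12 and l = 6 and k = 4]) simp
    then show False using a_off_lattice by blast
  qed
  moreover have "\<alpha> (1/3) - w - (a - \<alpha> 0) \<in> \<int>" if "\<alpha> w + \<alpha> (1/3) - a - 2 * w \<in> \<int>"
    using that by (rule Ints_lincomb2[OF _ shift, where i = 1 and j = "-1" and k = 0])
      (simp add: algebra_simps)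
  moreover have "c w \<noteq> c (1/3)" using same differ by simp
  ultimately show ?thesis using opposite_rule[OF w, of "1/3"] S by blast
qed

lemma pattern_A_impossible:
  assumes S: "{0, 1/6, 1/3, 1/2} \<subseteq> S"
    and colors: "c (1/6) = c 0" "c (1/2) = c 0" "c (1/3) \<noteq> c 0"
  shows False
proof -
  have pts: "0 \<in> S" "1/6 \<in> S" "1/3 \<in> S" "1/2 \<in> S" using S by auto
  have shift: "\<alpha> w - w - \<alpha> 0 \<in> \<int>" if "w \<in> S" "c w = c 0" "w \<notin> \<int>" for w
    using difference_rule[OF pts(1) that(1) that(2)[symmetric]] that(3) by simp
  have shift_0: "\<alpha> 0 - 0 - \<alpha> 0 \<in> \<int>" by simp
  note shift_sixth = shift[OF pts(2) colors(1)] and shift_half = shift[OF pts(4) colors(2)]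
  have "\<alpha> 0 + \<alpha> (1/6) - a - 0 - 1/6 \<in> \<int>"
    by (rule sum_rule[OF pts(1,2) colors(1)[symmetric]]) (simp add: sixths_not_Int)
  then have double: "2 * \<alpha> 0 - a \<in> \<int>"
    by (rule Ints_lincomb2[OF _ shift_sixth, where i = 1 and j = "-1" and k = 0])
      (simp_all add: sixths_not_Int algebra_simps)
  note choice = pattern_A_choice[OF S _ _ colors(3) double]
  have "\<alpha> (1/3) - w - 1/3 \<in> \<int> \<or> \<alpha> (1/3) - w - (a - \<alpha> 0) \<in> \<int>" if "w \<in> {0, 1/6, 1/2}" for w
  proof -
    from that consider "w = 0" | "w = 1/6" | "w = 1/2" by blast
    then show ?thesis
    proof cases
      case 1 show ?thesis unfolding 1 using choice[OF pts(1) refl shift_0] by simp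
    next
      case 2 show ?thesis unfolding 2 using choice[OF pts(2) colors(1) shift_sixth] by simp
    next
      case 3 show ?thesis unfolding 3 using choice[OF pts(4) colors(2) shift_half] by simp
    qed
  qed
  then show False
    by (rule three_points_two_values[where p = 0 and q = "1/6" and r = "1/2"])
      (simp_all add: sixths_not_Int)
qed

text \<open>The difference and sum rules give 2 \<alpha> 0 = a and 2 \<alpha> (1/6) = a + 1/3, and each case
  of the opposite rule for 0 and 1/6 contradicts these.\<close>

lemma pattern_B_impossible:
  assumes S: "{0, 1/6, 1/3, 1/2} \<subseteq> S"
    and colors: "c (1/3) = c 0" "c (1/2) = c (1/6)" "c (1/6) \<noteq> c 0"
  shows False
proof -
  have pts: "0 \<in> S" "1/6 \<in> S" "1/3 \<in> S" "1/2 \<in> S" using S by auto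
  have "\<alpha> (1/3) - 1/3 - (\<alpha> 0 - 0) \<in> \<int>"
    by (rule difference_rule[OF pts(1,3) colors(1)[symmetric]]) (simp add: sixths_not_Int)
  moreover have "\<alpha> 0 + \<alpha> (1/3) - a - 0 - 1/3 \<in> \<int>"
    by (rule sum_rule[OF pts(1,3) colors(1)[symmetric]]) (simp add: sixths_not_Int)
  ultimately have double_0: "2 * \<alpha> 0 - a \<in> \<int>"
    by (rule Ints_lincomb2[where i = "-1" and j = 1 and k = 0]) (simp add: algebra_simps)
  have "\<alpha> (1/2) - 1/2 - (\<alpha> (1/6) - 1/6) \<in> \<int>"
    by (rule difference_rule[OF pts(2,4) colors(2)[symmetric]]) (simp add: sixths_not_Int)
  moreover have "\<alpha> (1/6) + \<alpha> (1/2) - a - 1/6 - 1/2 \<in> \<int>"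
    by (rule sum_rule[OF pts(2,4) colors(2)[symmetric]]) (simp add: sixths_not_Int)
  ultimately have double_sixth: "2 * \<alpha> (1/6) - a - 1/3 \<in> \<int>"
    by (rule Ints_lincomb2[where i = "-1" and j = 1 and k = 0]) (simp add: algebra_simps)
  have "c 0 \<noteq> c (1/6)" using colors(3) by simp
  from opposite_rule[OF pts(1,2) this] show False
  proof (elim disjE)
    assume "\<alpha> (1/6) - 0 - 1/6 \<in> \<int>"
    then have "6 * a \<in> \<int>"
      by (rule Ints_lincomb2[OF _ double_sixth, where i = 12 and j = "-6" and k = 0])
        (simp add: algebra_simps)
    then show False using a_off_lattice by blast
  next
    assume "\<alpha> 0 + \<alpha> (1/6) - a - 2 * 0 \<in> \<int>"
    then have "(1/3::real) \<in> \<int>"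
      by (rule Ints_lincomb3[OF _ double_0 double_sixth,
            where i = 2 and j = "-1" and l = "-1" and k = 0])
        (simp add: algebra_simps)
    then show False using sixths_not_Int by blast
  next
    assume "a - \<alpha> 0 + 0 - 1/6 \<in> \<int>"
    then have "6 * a \<in> \<int>"
      by (rule Ints_lincomb2[OF _ double_0, where i = 12 and j = 6 and k = 2])
        (simp add: algebra_simps)
    then show False using a_off_lattice by blast
  qed
qed

end


section \<open>The hexagon and the extension of the precoloring\<close>

lemma lattice_reflection_on_hexagon:
  assumes per: "periodic1 c" and b: "6 * b \<in> \<int>" and rb: "reflection_invariant c b"
  shows "\<exists>k\<in>{0..5::int}. \<forall>j. c (of_int ((k - j) mod 6) / 6) = c (of_int j / 6)"
proof -
  obtain m where m: "6 * b = of_int m" using b by (auto elim: Ints_cases)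
  have "c (of_int (((m mod 6) - j) mod 6) / 6) = c (of_int j / 6)" for j
  proof -
    have "((m mod 6) - j) mod 6 = (m - j) - 6 * ((m - j) div 6)"
      using minus_mult_div_eq_mod[of "m - j" 6] by (simp add: mod_diff_left_eq)
    then have "of_int (((m mod 6) - j) mod 6) / 6 - (b - of_int j / 6) = - of_int ((m - j) div 6)"
      using m by (simp add: field_simps)
    then have "c (of_int (((m mod 6) - j) mod 6) / 6) = c (b - of_int j / 6)"
      by (intro periodic1_cong[OF per]) simp
    then show ?thesis using reflection_invariantD[OF rb] by simp
  qed
  then show ?thesis by (intro bexI[of _ "m mod 6"]) auto
qed

lemma no_lattice_reflection_from_hexagon:
  assumes per: "periodic1 c"
    and asym: "\<forall>k\<in>{0..5::int}. \<exists>j\<in>{0..5::int}. c (of_int ((k - j) mod 6) / 6) \<noteq> c (of_int j / 6)"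
  shows "no_lattice_reflection c"
  unfolding no_lattice_reflection_def using asym lattice_reflection_on_hexagon[OF per] by fastforce

lemma hexagon_indices: "{0..5::int} = {0, 1, 2, 3, 4, 5}"
  by auto

definition extend :: "(real \<Rightarrow> color) \<Rightarrow> color \<Rightarrow> color \<Rightarrow> color \<Rightarrow> color \<Rightarrow> real \<Rightarrow> color" where
  "extend p u0 u1 u2 u3 x =
     (if x \<in> \<int> then u0 else if x - 1/6 \<in> \<int> then u1 else if x - 1/3 \<in> \<int> then u2
      else if x - 1/2 \<in> \<int> then u3 else p x)"

lemma periodic1_extend:
  assumes "periodic1 p"
  shows "periodic1 (extend p u0 u1 u2 u3)"
  unfolding periodic1_def
proof
  fix x :: real
  have "x + 1 \<in> \<int> \<longleftrightarrow> x \<in> \<int>" using Ints_add_1_diff_iff[of x 0] by simp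
  moreover have "p (x + 1) = p x" using assms unfolding periodic1_def by blast
  ultimately show "extend p u0 u1 u2 u3 (x + 1) = extend p u0 u1 u2 u3 x"
    unfolding extend_def Ints_add_1_diff_iff by simp
qed

lemma extend_values:
  "extend p u0 u1 u2 u3 0 = u0" "extend p u0 u1 u2 u3 (1/6) = u1"
  "extend p u0 u1 u2 u3 (1/3) = u2" "extend p u0 u1 u2 u3 (1/2) = u3"
  "extend p u0 u1 u2 u3 (2/3) = p (2/3)" "extend p u0 u1 u2 u3 (5/6) = p (5/6)"
  by (simp_all add: extend_def sixths_not_Int Ints_between_0_1)

lemma extend_outside:
  assumes "\<not> in_circle_set x {0, 1/6, 1/3, 1/2}"
  shows "extend p u0 u1 u2 u3 x = p x"
  using assms by (simp add: extend_def in_circle_set_def)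

definition W_pattern :: "(real \<Rightarrow> color) \<Rightarrow> bool" where
  "W_pattern c \<longleftrightarrow> (c (1/6) = c 0 \<and> c (1/2) = c 0 \<and> c (1/3) \<noteq> c 0) \<or>
                    (c (1/3) = c 0 \<and> c (1/2) = c (1/6) \<and> c (1/6) \<noteq> c 0)"

lemma good_extension:
  assumes pp: "periodic1 p"
  obtains c where "periodic1 c" "\<forall>x. \<not> in_circle_set x {0, 1/6, 1/3, 1/2} \<longrightarrow> c x = p x"
    "no_lattice_reflection c"
    "W_pattern c"
proof (cases "p (2/3) = p (5/6)")
  case True
  let ?c = "extend p (other (p (2/3))) (other (p (2/3))) (p (2/3)) (other (p (2/3)))"
  have nolat: "no_lattice_reflection ?c"
    by (rule no_lattice_reflection_from_hexagon[OF periodic1_extend[OF pp]])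
      (simp add: hexagon_indices extend_values True)
  show thesis
    by (rule that[OF periodic1_extend[OF pp] _ nolat])
      (simp_all add: extend_outside extend_values W_pattern_def)
next
  case False
  then have other: "p (2/3) = other (p (5/6))" by (metis neq_other_iff)
  let ?c = "extend p (p (5/6)) (p (2/3)) (p (5/6)) (p (2/3))"
  have nolat: "no_lattice_reflection ?c"
    by (rule no_lattice_reflection_from_hexagon[OF periodic1_extend[OF pp]])
      (simp add: hexagon_indices extend_values other)
  show thesis
    by (rule that[OF periodic1_extend[OF pp] _ nolat])
      (simp_all add: extend_outside extend_values other W_pattern_def)
qed


lemma one_of_five_distinguishing:
  assumes per: "periodic1 c" and nolat: "no_lattice_reflection c"
    and pattern: "W_pattern c"
  shows "distinguishing c \<or> (\<exists>w\<in>{0, 1/6, 1/3, 1/2}. distinguishing (flip c w))"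
proof (rule ccontr)
  define S :: "real set" where "S = {0, 1/6, 1/3, 1/2}"
  assume "\<not> ?thesis"
  then have nd: "\<not> distinguishing c" "\<And>w. w \<in> S \<Longrightarrow> \<not> distinguishing (flip c w)"
    unfolding S_def by blast+
  have "S \<subseteq> {w. 6 * w \<in> \<int> \<and> 12 * w \<in> \<int>}" by (simp add: S_def)
  then have lattice: "6 * w \<in> \<int>" "12 * w \<in> \<int>" if "w \<in> S" for w using that by blast+
  have "0 \<in> S" by (simp add: S_def)
  then obtain a where ra: "reflection_invariant c a" and a: "6 * a \<notin> \<int>"
    using off_lattice_reflection[OF per nolat lattice(2) nd(1) nd(2)] by blast
  have "\<exists>\<alpha>. reflection_invariant (flip c w) \<alpha> \<and> \<alpha> - 2 * w \<notin> \<int> \<and> a - \<alpha> \<notin> \<int>"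
    if "w \<in> S" for w
    by (rule flip_reflection_parameter[OF per nolat ra a lattice(2)[OF that] nd(2)[OF that]]) blast
  then have "\<forall>w\<in>S. \<exists>\<alpha>. reflection_invariant (flip c w) \<alpha> \<and> \<alpha> - 2 * w \<notin> \<int> \<and> a - \<alpha> \<notin> \<int>"
    by blast
  from bchoice[OF this] obtain \<alpha> where \<alpha>: "\<forall>w\<in>S.
      reflection_invariant (flip c w) (\<alpha> w) \<and> \<alpha> w - 2 * w \<notin> \<int> \<and> a - \<alpha> w \<notin> \<int>"
    by blast
  interpret reflection_data c a S \<alpha>
    by unfold_locales (use per ra a lattice(1) \<alpha> in blast)+
  have "{0, 1/6, 1/3, 1/2} \<subseteq> S" by (simp add: S_def)
  then show False
    using pattern pattern_A_impossible pattern_B_impossible unfolding W_pattern_def by blast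
qed

theorem lemma2p3p10:
  shows "P {0, 1/6, 1/3, 1/2}"
  unfolding P_def
proof (intro allI impI)
  fix p :: "real \<Rightarrow> color"
  assume "periodic1 p"
  then obtain c where per: "periodic1 c"
    and agree: "\<forall>x. \<not> in_circle_set x {0, 1/6, 1/3, 1/2} \<longrightarrow> c x = p x"
    and nolat: "no_lattice_reflection c"
    and pattern: "W_pattern c"
    by (rule good_extension)
  have flip_agree: "\<forall>x. \<not> in_circle_set x {0, 1/6, 1/3, 1/2} \<longrightarrow> flip c w x = p x"
    if "w \<in> {0, 1/6, 1/3, 1/2}" for w
    using agree flip_outside[OF that] by simp
  from one_of_five_distinguishing[OF per nolat pattern]
  show "\<exists>c. periodic1 c \<and> (\<forall>x. \<not> in_circle_set x {0, 1/6, 1/3, 1/2} \<longrightarrow> c x = p x) \<and>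
            distinguishing c"
    using per agree periodic1_flip[OF per] flip_agree by blast
qed

end
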